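(* Let $\kappa$ be an uncountable regular cardinal and let $\mathcal{I}$ be a $\kappa$-complete proper ideal on $\kappa$ containing every bounded subset of $\kappa$, and suppose $\mathcal{I}$ contains an unbounded subset of $\kappa$. Let $\nu\in\{2,\kappa\}$. Then every subset of ${}^{\kappa}\nu$ is $\mathcal{I}$-analytic.
   Context: Work in ZFC. For $\mu\in\{2,\kappa\}$, ${}^{\kappa}\mu$ is the set of functions $\kappa\to\mu$. For $f\colon D\to\mu$ with $D\in\mathcal{I}$ let $\mathbf{N}_f=\{x\in{}^{\kappa}\mu: f\subseteq x\}$; the $\mathcal{I}$-topology $\tau_{\mathcal{I}}$ on ${}^{\kappa}\mu$ is generated by these sets. A function ${}^{\kappa}\kappa\to{}^{\kappa}\nu$ is $\mathcal{I}$-continuous if it is continuous when both spaces carry $\tau_{\mathcal{I}}$. A set $A\subseteq{}^{\kappa}\nu$ is $\mathcal{I}$-analytic if either $A=\emptyset$ or there are a $\tau_{\mathcal{I}}$-closed set $C\subseteq{}^{\kappa}\kappa$ and an $\mathcal{I}$-continuous function $\Phi\colon{}^{\kappa}\kappa\to{}^{\kappa}\nu$ with $\Phi(C)=A$. *)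

theory Defs
  imports "HOL-Analysis.Analysis"
begin

text \<open>The cardinal kappa is represented by a type 'k carrying a cardinal
  well-order r with Field r = UNIV (so 'k is identified with the ordinal kappa).
  Functions kappa to nu are total functions 'k to 'v (nu = 2 is bool, nu = kappa is 'k).\<close>

definition uncountable_regular_cardinal :: "'k rel \<Rightarrow> bool" where
  "uncountable_regular_cardinal r \<longleftrightarrow>
     Card_order r \<and> Field r = UNIV \<and> regularCard r \<and> \<not> countable (UNIV :: 'k set)"

definition bounded_in :: "'k rel \<Rightarrow> 'k set \<Rightarrow> bool" where
  "bounded_in r B \<longleftrightarrow> (\<exists>\<beta>. \<forall>x\<in>B. (x, \<beta>) \<in> r)"

definition ideal_on :: "'k set set \<Rightarrow> bool" where
  "ideal_on I \<longleftrightarrow> {} \<in> I \<and> (\<forall>A B. A \<in> I \<and> B \<subseteq> A \<longrightarrow> B \<in> I)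
     \<and> (\<forall>A B. A \<in> I \<and> B \<in> I \<longrightarrow> A \<union> B \<in> I)"

definition proper_ideal :: "'k set set \<Rightarrow> bool" where
  "proper_ideal I \<longleftrightarrow> ideal_on I \<and> UNIV \<notin> I"

definition complete_ideal :: "'k rel \<Rightarrow> 'k set set \<Rightarrow> bool" where
  "complete_ideal r I \<longleftrightarrow> (\<forall>F. F \<subseteq> I \<and> (card_of F, r) \<in> ordLess \<longrightarrow> \<Union>F \<in> I)"

definition I_basic :: "'k set set \<Rightarrow> ('k \<Rightarrow> 'v) set set" where
  "I_basic I = {{x. \<forall>d\<in>D. x d = f d} | D f. D \<in> I}"

definition I_topology :: "'k set set \<Rightarrow> ('k \<Rightarrow> 'v) topology" where
  "I_topology I = topology_generated_by (I_basic I)"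

definition I_analytic :: "'k set set \<Rightarrow> ('k \<Rightarrow> 'v) set \<Rightarrow> bool" where
  "I_analytic I A \<longleftrightarrow> A = {} \<or>
     (\<exists>(C :: ('k \<Rightarrow> 'k) set) (\<Phi> :: ('k \<Rightarrow> 'k) \<Rightarrow> ('k \<Rightarrow> 'v)).
        closedin (I_topology I) C \<and> continuous_map (I_topology I) (I_topology I) \<Phi> \<and> \<Phi> ` C = A)"

end

theory Submission
  imports Defs
begin

text \<open>Only the hypothesis that \<open>\<I>\<close> contains an unbounded set \<open>U\<close> matters. By regularity
  \<open>U\<close> has size \<open>\<kappa>\<close>, so fixing an injection \<open>e : \<kappa> \<rightarrow> U\<close> and a surjection \<open>g : \<kappa> \<rightarrow> \<nu>\<close>,
  the map \<open>\<Phi> x = g \<circ> x \<circ> e\<close> is onto \<open>\<^sup>\<kappa>\<nu>\<close>. Since \<open>\<Phi> x\<close> only depends on \<open>x\<close> restricted to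
  \<open>U \<in> \<I>\<close>, the map \<open>\<Phi>\<close> is \<open>\<I>\<close>-continuous and every preimage under \<open>\<Phi>\<close> is \<open>\<I>\<close>-clopen;
  hence any \<open>A\<close> is the image of the closed set \<open>\<Phi>\<^sup>-\<^sup>1(A)\<close>.\<close>

definition depends_only_on :: "'k set \<Rightarrow> (('k \<Rightarrow> 'a) \<Rightarrow> 'b) \<Rightarrow> bool" where
  "depends_only_on U f \<longleftrightarrow> (\<forall>x y. (\<forall>u\<in>U. x u = y u) \<longrightarrow> f x = f y)"

lemma depends_only_onD: "depends_only_on U f \<Longrightarrow> (\<And>u. u \<in> U \<Longrightarrow> x u = y u) \<Longrightarrow> f x = f y"
  unfolding depends_only_on_def by blast

lemma depends_only_on_compose: "depends_only_on U f \<Longrightarrow> depends_only_on U (\<lambda>x. h (f x))"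
  unfolding depends_only_on_def by (intro allI impI arg_cong[where f = h]) blast

lemma topspace_I_topology: "D \<in> I \<Longrightarrow> topspace (I_topology I) = UNIV"
  unfolding I_topology_def I_basic_def by (auto intro!: exI[of _ D])

lemma openin_I_topology_if_depends_only_on:
  fixes S :: "('k \<Rightarrow> 'v) set"
  assumes "U \<in> I" and "depends_only_on U (\<lambda>x. x \<in> S)"
  shows "openin (I_topology I) S"
proof -
  let ?cyl = "\<lambda>x. {y. \<forall>u\<in>U. y u = x u}"
  have "S = \<Union> (?cyl ` S)"
  proof
    show "\<Union> (?cyl ` S) \<subseteq> S"
    proof
      fix y
      assume "y \<in> \<Union> (?cyl ` S)"
      then obtain x where "x \<in> S" and "\<forall>u\<in>U. y u = x u"
        by blast
      then show "y \<in> S"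
        using depends_only_onD[OF assms(2), of y x] by simp
    qed
  qed blast
  moreover have "generate_topology_on (I_basic I) (?cyl x)" for x :: "'k \<Rightarrow> 'v"
    using assms(1) by (auto simp: I_basic_def intro!: generate_topology_on.Basis)
  then have "generate_topology_on (I_basic I) (\<Union> (?cyl ` S))"
    by (intro generate_topology_on.UN) auto
  ultimately show ?thesis
    unfolding I_topology_def openin_topology_generated_by_iff by simp
qed

lemma closedin_I_topology_if_depends_only_on:
  fixes S :: "('k \<Rightarrow> 'v) set"
  assumes "U \<in> I" and "depends_only_on U (\<lambda>x. x \<in> S)"
  shows "closedin (I_topology I) S"
proof -
  have "depends_only_on U (\<lambda>x. x \<in> - S)"
    using depends_only_on_compose[OF assms(2), of Not] by simp
  then have "openin (I_topology I) (- S)"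
    by (rule openin_I_topology_if_depends_only_on[OF assms(1)])
  then show ?thesis
    unfolding closedin_def topspace_I_topology[OF assms(1)] by (simp add: Compl_eq_Diff_UNIV)
qed

lemma continuous_map_I_topology_if_depends_only_on:
  fixes \<Phi> :: "('k \<Rightarrow> 'v) \<Rightarrow> 'a"
  assumes "U \<in> I" and "depends_only_on U \<Phi>" and "range \<Phi> \<subseteq> topspace X"
  shows "continuous_map (I_topology I) X \<Phi>"
  unfolding continuous_map_def topspace_I_topology[OF assms(1)]
proof (intro conjI allI impI)
  show "\<Phi> \<in> UNIV \<rightarrow> topspace X"
    using assms(3) by blast
  fix S
  have "depends_only_on U (\<lambda>x. x \<in> {x. \<Phi> x \<in> S})"
    using depends_only_on_compose[OF assms(2)] by simp
  then have "openin (I_topology I) {x. \<Phi> x \<in> S}"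
    by (rule openin_I_topology_if_depends_only_on[OF assms(1)])
  then show "openin (I_topology I) {x \<in> UNIV. \<Phi> x \<in> S}"
    by simp
qed

lemma I_analytic_if_surj_depends_only_on:
  fixes \<Phi> :: "('k \<Rightarrow> 'k) \<Rightarrow> ('k \<Rightarrow> 'v)" and A :: "('k \<Rightarrow> 'v) set"
  assumes "U \<in> I" and "depends_only_on U \<Phi>" and "surj \<Phi>"
  shows "I_analytic I A"
proof -
  have "closedin (I_topology I) (\<Phi> -` A)"
    using depends_only_on_compose[OF assms(2)]
    by (intro closedin_I_topology_if_depends_only_on[OF assms(1)]) simp
  moreover have "continuous_map (I_topology I) (I_topology I) \<Phi>"
    using assms(1,2) topspace_I_topology[OF assms(1)]
    by (intro continuous_map_I_topology_if_depends_only_on) auto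
  moreover have "\<Phi> ` (\<Phi> -` A) = A"
    using assms(3) by (simp add: surj_image_vimage_eq)
  ultimately show ?thesis
    unfolding I_analytic_def by blast
qed

lemma I_analytic_if_inj_into_ideal:
  fixes e :: "'k \<Rightarrow> 'k" and g :: "'k \<Rightarrow> 'v" and A :: "('k \<Rightarrow> 'v) set"
  assumes "U \<in> I" and "inj e" and "range e \<subseteq> U" and "surj g"
  shows "I_analytic I A"
proof (rule I_analytic_if_surj_depends_only_on[OF assms(1)])
  show "depends_only_on U (\<lambda>x. g \<circ> x \<circ> e)"
    unfolding depends_only_on_def
  proof (intro allI impI ext)
    fix x y :: "'k \<Rightarrow> 'k" and a
    assume "\<forall>u\<in>U. x u = y u"
    moreover have "e a \<in> U"
      using assms(3) by blast
    ultimately show "(g \<circ> x \<circ> e) a = (g \<circ> y \<circ> e) a"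
      by simp
  qed
  show "surj (\<lambda>x. g \<circ> x \<circ> e)"
  proof (rule surjI)
    fix y :: "'k \<Rightarrow> 'v"
    show "g \<circ> (inv g \<circ> y \<circ> inv e) \<circ> e = y"
      using assms(2,4) by (simp add: fun_eq_iff surj_f_inv_f)
  qed
qed

lemma cofinal_if_not_bounded_in:
  fixes r :: "'k rel" and U :: "'k set"
  assumes "Well_order r" and "Field r = UNIV" and "\<not> bounded_in r U"
  shows "cofinal U r"
  unfolding cofinal_def
proof
  fix a :: 'k
  obtain b where "b \<in> U" and "(b, a) \<notin> r"
    using assms(3) unfolding bounded_in_def by blast
  moreover have "refl_on UNIV r"
    using wo_rel.REFL[of r] assms(1,2) by (simp add: wo_rel_def)
  then have "a \<noteq> b"
    using \<open>(b, a) \<notin> r\<close> by (auto dest: refl_onD)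
  moreover have "a = b \<or> (a, b) \<in> r \<or> (b, a) \<in> r"
    using wo_rel.TOTALS[of r] assms(1,2) by (simp add: wo_rel_def)
  ultimately show "\<exists>b\<in>U. a \<noteq> b \<and> (a, b) \<in> r"
    by blast
qed

lemma card_of_ordIso_UNIV_if_not_bounded_in:
  fixes r :: "'k rel" and U :: "'k set"
  assumes "Card_order r" and "Field r = UNIV" and "regularCard r" and "\<not> bounded_in r U"
  shows "(card_of U, card_of (UNIV :: 'k set)) \<in> ordIso"
proof -
  have "cofinal U r"
    using card_order_on_well_order_on[OF assms(1)] assms(2,4) by (rule cofinal_if_not_bounded_in)
  then have "(card_of U, r) \<in> ordIso"
    using assms(2,3) unfolding regularCard_def by blast
  moreover have "(card_of (UNIV :: 'k set), r) \<in> ordIso"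
    using card_of_Field_ordIso[OF assms(1)] assms(2) by simp
  ultimately show ?thesis
    by (rule ordIso_transitive[OF _ ordIso_symmetric])
qed

theorem corollary5p3:
  fixes r :: "'k rel" and I :: "'k set set"
  assumes "uncountable_regular_cardinal r"
    and "proper_ideal I"
    and "complete_ideal r I"
    and "\<forall>B. bounded_in r B \<longrightarrow> B \<in> I"
    and "\<exists>U\<in>I. \<not> bounded_in r U"
  shows "(\<forall>A :: ('k \<Rightarrow> bool) set. I_analytic I A) \<and> (\<forall>A :: ('k \<Rightarrow> 'k) set. I_analytic I A)"
proof -
  obtain U where "U \<in> I" and "\<not> bounded_in r U"
    using assms(5) by blast
  then have "(card_of U, card_of (UNIV :: 'k set)) \<in> ordIso"
    using assms(1) unfolding uncountable_regular_cardinal_def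
    by (intro card_of_ordIso_UNIV_if_not_bounded_in) auto
  then obtain e :: "'k \<Rightarrow> 'k" where "bij_betw e UNIV U"
    using card_of_ordIso ordIso_symmetric by metis
  then have "inj e" and "range e \<subseteq> U"
    by (auto simp: bij_betw_def)
  have "infinite (UNIV :: 'k set)"
    using assms(1) countable_finite unfolding uncountable_regular_cardinal_def by blast
  then obtain c0 c1 :: 'k where "c0 \<noteq> c1"
    by (metis (full_types) ex_new_if_finite finite.emptyI finite.insertI singletonI)
  then have "surj (\<lambda>a. a = c0)"
    by (intro surjI[where f = "\<lambda>b. if b then c0 else c1"]) auto
  have "I_analytic I A" for A :: "('k \<Rightarrow> bool) set"
    by (rule I_analytic_if_inj_into_ideal[OF \<open>U \<in> I\<close> \<open>inj e\<close> \<open>range e \<subseteq> U\<close> \<open>surj (\<lambda>a. a = c0)\<close>])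
  moreover have "I_analytic I A" for A :: "('k \<Rightarrow> 'k) set"
    by (rule I_analytic_if_inj_into_ideal[OF \<open>U \<in> I\<close> \<open>inj e\<close> \<open>range e \<subseteq> U\<close> surj_id])
  ultimately show ?thesis
    by blast
qed

end
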